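(* Let $G$ be a planar PCC graph and let $Z$ be the number of vertices $v$ with face vector $f(v)=(5,6,7)$ or $f(v)=(3,3,5,7)$. Then $Z\le 210$.
   Context: $G$ is a finite simple connected graph 2-cell embedded in the sphere; the face vector $f(v)$ is the multiset of sizes (boundary walk lengths) of the faces incident to $v$, one per corner, in nondecreasing order; $K(v)=1-\frac{\deg(v)}{2}+\sum_{\sigma\in F(v)}\frac1{|\sigma|}$. A prism (resp. antiprism) of order $N$ is the planar graph with $2N$ vertices, two $N$-faces and $N$ quadrilaterals (resp. $2N$ triangles), each vertex incident to two quadrilaterals and one $N$-face (resp. three triangles and one $N$-face). A planar PCC graph is such a $G$ with $K(v)>0$, $\deg(v)\ge3$ for all $v$, not a prism or antiprism. *)

theory Defs
  imports Complex_Main "HOL-Library.Multiset"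
begin

text \<open>A finite simple graph with vertex set V and symmetric irreflexive adjacency E,
  together with a rotation system rot: for each vertex v, rot v is a cyclic
  permutation of the neighbourhood of v (the clockwise order of edges around v).  The face permutation sends the dart
  (u,w) to (w, rot w u); faces are its orbits, and the size of a face is the
  length of its boundary walk (= number of darts in the orbit).\<close>

definition nbrs :: "('v \<Rightarrow> 'v \<Rightarrow> bool) \<Rightarrow> 'v \<Rightarrow> 'v set" where
  "nbrs E v = {w. E v w}"

definition deg :: "('v \<Rightarrow> 'v \<Rightarrow> bool) \<Rightarrow> 'v \<Rightarrow> nat" where
  "deg E v = card (nbrs E v)"

definition darts :: "('v \<Rightarrow> 'v \<Rightarrow> bool) \<Rightarrow> ('v \<times> 'v) set" where
  "darts E = {(u, w). E u w}"

definition graph_edges :: "('v \<Rightarrow> 'v \<Rightarrow> bool) \<Rightarrow> 'v set set" where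
  "graph_edges E = {{u, w} | u w. E u w}"

definition simple_graph :: "'v set \<Rightarrow> ('v \<Rightarrow> 'v \<Rightarrow> bool) \<Rightarrow> bool" where
  "simple_graph V E \<longleftrightarrow> finite V \<and> (\<forall>u w. E u w \<longrightarrow> u \<in> V \<and> w \<in> V)
     \<and> (\<forall>u w. E u w \<longrightarrow> E w u) \<and> (\<forall>u. \<not> E u u)"

definition connected_graph :: "'v set \<Rightarrow> ('v \<Rightarrow> 'v \<Rightarrow> bool) \<Rightarrow> bool" where
  "connected_graph V E \<longleftrightarrow> V \<noteq> {} \<and> (\<forall>u\<in>V. \<forall>w\<in>V. E\<^sup>*\<^sup>* u w)"

definition rotation_system :: "'v set \<Rightarrow> ('v \<Rightarrow> 'v \<Rightarrow> bool) \<Rightarrow> ('v \<Rightarrow> 'v \<Rightarrow> 'v) \<Rightarrow> bool" where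
  "rotation_system V E rot \<longleftrightarrow>
     (\<forall>v\<in>V. \<forall>w\<in>nbrs E v. rot v w \<in> nbrs E v
        \<and> nbrs E v = {(rot v ^^ k) w | k. True})"

definition face_perm :: "('v \<Rightarrow> 'v \<Rightarrow> 'v) \<Rightarrow> 'v \<times> 'v \<Rightarrow> 'v \<times> 'v" where
  "face_perm rot d = (snd d, rot (snd d) (fst d))"

definition face_of :: "('v \<Rightarrow> 'v \<Rightarrow> 'v) \<Rightarrow> 'v \<times> 'v \<Rightarrow> ('v \<times> 'v) set" where
  "face_of rot d = {(face_perm rot ^^ k) d | k. True}"

definition faces :: "('v \<Rightarrow> 'v \<Rightarrow> bool) \<Rightarrow> ('v \<Rightarrow> 'v \<Rightarrow> 'v) \<Rightarrow> ('v \<times> 'v) set set" where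
  "faces E rot = face_of rot ` darts E"

text \<open>2-cell embedding in the sphere: connected, and Euler characteristic 2.\<close>
definition spherical_map :: "'v set \<Rightarrow> ('v \<Rightarrow> 'v \<Rightarrow> bool) \<Rightarrow> ('v \<Rightarrow> 'v \<Rightarrow> 'v) \<Rightarrow> bool" where
  "spherical_map V E rot \<longleftrightarrow> simple_graph V E \<and> connected_graph V E
     \<and> rotation_system V E rot
     \<and> int (card V) - int (card (graph_edges E)) + int (card (faces E rot)) = 2"

text \<open>Face vector: one entry per corner at v; the corner preceding the dart (v,w)
  lies on the face containing (v,w).\<close>
definition face_vector :: "('v \<Rightarrow> 'v \<Rightarrow> bool) \<Rightarrow> ('v \<Rightarrow> 'v \<Rightarrow> 'v) \<Rightarrow> 'v \<Rightarrow> nat multiset" where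
  "face_vector E rot v = image_mset (\<lambda>w. card (face_of rot (v, w))) (mset_set (nbrs E v))"

definition curvature :: "('v \<Rightarrow> 'v \<Rightarrow> bool) \<Rightarrow> ('v \<Rightarrow> 'v \<Rightarrow> 'v) \<Rightarrow> 'v \<Rightarrow> real" where
  "curvature E rot v = 1 - real (deg E v) / 2
     + (\<Sum>w\<in>nbrs E v. 1 / real (card (face_of rot (v, w))))"

definition prism_adj :: "nat \<Rightarrow> nat \<Rightarrow> nat \<Rightarrow> bool" where
  "prism_adj N i j \<longleftrightarrow> i < 2 * N \<and> j < 2 * N \<and>
     ((i < N \<and> j < N \<and> (j = (i + 1) mod N \<or> i = (j + 1) mod N))
      \<or> (N \<le> i \<and> N \<le> j \<and> (j - N = (i - N + 1) mod N \<or> i - N = (j - N + 1) mod N))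
      \<or> j = i + N \<or> i = j + N)"

definition antiprism_adj :: "nat \<Rightarrow> nat \<Rightarrow> nat \<Rightarrow> bool" where
  "antiprism_adj N i j \<longleftrightarrow> i < 2 * N \<and> j < 2 * N \<and>
     ((i < N \<and> j < N \<and> (j = (i + 1) mod N \<or> i = (j + 1) mod N))
      \<or> (N \<le> i \<and> N \<le> j \<and> (j - N = (i - N + 1) mod N \<or> i - N = (j - N + 1) mod N))
      \<or> (i < N \<and> (j = N + i \<or> j = N + (i + 1) mod N))
      \<or> (j < N \<and> (i = N + j \<or> i = N + (j + 1) mod N)))"

definition iso_to :: "'v set \<Rightarrow> ('v \<Rightarrow> 'v \<Rightarrow> bool) \<Rightarrow> nat set \<Rightarrow> (nat \<Rightarrow> nat \<Rightarrow> bool) \<Rightarrow> bool" where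
  "iso_to V E W F \<longleftrightarrow> (\<exists>f. bij_betw f V W \<and> (\<forall>u\<in>V. \<forall>w\<in>V. E u w \<longleftrightarrow> F (f u) (f w)))"

definition is_prism :: "'v set \<Rightarrow> ('v \<Rightarrow> 'v \<Rightarrow> bool) \<Rightarrow> bool" where
  "is_prism V E \<longleftrightarrow> (\<exists>N\<ge>3. iso_to V E {0..<2*N} (prism_adj N))"

definition is_antiprism :: "'v set \<Rightarrow> ('v \<Rightarrow> 'v \<Rightarrow> bool) \<Rightarrow> bool" where
  "is_antiprism V E \<longleftrightarrow> (\<exists>N\<ge>3. iso_to V E {0..<2*N} (antiprism_adj N))"

definition planar_PCC :: "'v set \<Rightarrow> ('v \<Rightarrow> 'v \<Rightarrow> bool) \<Rightarrow> ('v \<Rightarrow> 'v \<Rightarrow> 'v) \<Rightarrow> bool" where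
  "planar_PCC V E rot \<longleftrightarrow> spherical_map V E rot
     \<and> (\<forall>v\<in>V. curvature E rot v > 0 \<and> deg E v \<ge> 3)
     \<and> \<not> is_prism V E \<and> \<not> is_antiprism V E"

end

theory Submission
  imports Defs
begin

text \<open>Discrete Gauss--Bonnet: in \<open>\<Sum>v. K(v)\<close> every vertex contributes 1, every edge
  \<open>-1\<close> (half of it at each end), and every face \<open>\<sigma>\<close> contributes \<open>+1\<close>, since each of
  its \<open>|\<sigma>|\<close> corners (darts of the face orbit) carries \<open>1/|\<sigma>|\<close>. Hence the total curvature
  is the Euler characteristic 2. A vertex with face vector \<open>(5,6,7)\<close> or \<open>(3,3,5,7)\<close> has
  curvature exactly \<open>1/105\<close>, and all curvatures are positive, so there are at most
  \<open>2 \<cdot> 105\<close> such vertices.\<close>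

lemma inj_on_if_orbits_cover:
  assumes "finite A" and maps: "\<And>x. x \<in> A \<Longrightarrow> f x \<in> A"
    and orbit: "\<And>x. x \<in> A \<Longrightarrow> A = {(f ^^ k) x | k. True}"
  shows "inj_on f A"
proof (rule finite_surj_inj[OF \<open>finite A\<close>], rule subsetI)
  fix x assume x: "x \<in> A"
  then obtain k where "x = (f ^^ k) (f x)" using orbit[of "f x"] maps by blast
  moreover have "(f ^^ k) x \<in> A" using x maps by (induction k) auto
  ultimately show "x \<in> f ` A" by (metis funpow_swap1 imageI)
qed

lemma funpow_periodic:
  assumes "finite D" and bij: "bij_betw p D D" and "d \<in> D"
  obtains n where "n > 0" and "(p ^^ n) d = d"
proof -
  have "range (\<lambda>k. (p ^^ k) d) \<subseteq> D"
    using bij_betw_funpow[OF bij] \<open>d \<in> D\<close> by (auto dest: bij_betw_apply)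
  then have "\<not> inj (\<lambda>k. (p ^^ k) d)"
    using \<open>finite D\<close> finite_imageD finite_subset infinite_UNIV_nat by blast
  then obtain i j where "i < j" and eq: "(p ^^ i) d = (p ^^ j) d"
    unfolding inj_def by (metis linorder_neqE_nat)
  have "(p ^^ i) ((p ^^ (j - i)) d) = (p ^^ i) d"
    using eq \<open>i < j\<close> by (simp flip: funpow_add[unfolded comp_def, THEN fun_cong])
  moreover have "(p ^^ (j - i)) d \<in> D"
    using bij_betw_funpow[OF bij] \<open>d \<in> D\<close> by (auto dest: bij_betw_apply)
  ultimately have "(p ^^ (j - i)) d = d"
    using bij_betw_imp_inj_on[OF bij_betw_funpow[OF bij]] \<open>d \<in> D\<close> by (meson inj_onD)
  with \<open>i < j\<close> show thesis by (intro that[of "j - i"]) auto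
qed

lemma funpow_orbit_eq:
  assumes "finite D" and bij: "bij_betw p D D" and "d \<in> D"
    and "d' \<in> {(p ^^ k) d | k. True}"
  shows "{(p ^^ k) d' | k. True} = {(p ^^ k) d | k. True}"
proof -
  obtain m where d': "d' = (p ^^ m) d" using assms(4) by blast
  obtain n where "n > 0" and period: "(p ^^ n) d = d"
    using funpow_periodic[OF assms(1-3)] by blast
  have period_mult: "(p ^^ (n * t)) d = d" for t
    using period by (induction t) (simp_all add: funpow_add)
  have "(p ^^ k) d = (p ^^ (k + n * m - m)) d'" for k
  proof -
    have exponent: "k + n * m - m + m = k + n * m"
      using \<open>n > 0\<close> by (cases n) auto
    have "(p ^^ k) d = (p ^^ (k + n * m)) d"
      using period_mult[of m] by (simp add: funpow_add)
    also have "\<dots> = (p ^^ (k + n * m - m + m)) d"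
      by (simp only: exponent)
    also have "\<dots> = (p ^^ (k + n * m - m)) d'"
      by (simp add: d' funpow_add)
    finally show ?thesis .
  qed
  moreover have "(p ^^ k) d' = (p ^^ (k + m)) d" for k
    by (simp add: d' funpow_add)
  ultimately show ?thesis by blast
qed

lemma sum_inverse_card_classes:
  fixes C :: "'a \<Rightarrow> 'a set"
  assumes "finite D"
    and self: "\<And>d. d \<in> D \<Longrightarrow> d \<in> C d"
    and sub: "\<And>d. d \<in> D \<Longrightarrow> C d \<subseteq> D"
    and eq: "\<And>d d'. d \<in> D \<Longrightarrow> d' \<in> C d \<Longrightarrow> C d' = C d"
  shows "(\<Sum>d\<in>D. 1 / real (card (C d))) = real (card (C ` D))"
proof -
  have "(\<Sum>d\<in>D. 1 / real (card (C d)))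
      = (\<Sum>K\<in>C ` D. \<Sum>d\<in>{d \<in> D. C d = K}. 1 / real (card (C d)))"
    by (rule sum.image_gen[OF \<open>finite D\<close>])
  also have "\<dots> = (\<Sum>K\<in>C ` D. 1)"
  proof (rule sum.cong[OF refl])
    fix K assume "K \<in> C ` D"
    then obtain d where "d \<in> D" and K: "K = C d" by blast
    then have fiber: "{d' \<in> D. C d' = K} = K" using self sub eq by blast
    have "finite K" "K \<noteq> {}"
      using K \<open>d \<in> D\<close> self sub \<open>finite D\<close> finite_subset by blast+
    have "(\<Sum>d'\<in>{d' \<in> D. C d' = K}. 1 / real (card (C d')))
        = (\<Sum>d'\<in>{d' \<in> D. C d' = K}. 1 / real (card K))"
      by (rule sum.cong) auto
    also have "\<dots> = 1"
      using \<open>finite K\<close> \<open>K \<noteq> {}\<close> by (simp add: fiber)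
    finally show "(\<Sum>d'\<in>{d' \<in> D. C d' = K}. 1 / real (card (C d'))) = 1" .
  qed
  finally show ?thesis by simp
qed

lemma simple_graph_finite_nbrs:
  assumes "simple_graph V E"
  shows "finite (nbrs E v)"
proof -
  have "nbrs E v \<subseteq> V" using assms unfolding simple_graph_def nbrs_def by auto
  then show ?thesis using assms finite_subset unfolding simple_graph_def by blast
qed

lemma simple_graph_darts_eq_Sigma:
  assumes "simple_graph V E"
  shows "darts E = Sigma V (nbrs E)"
  using assms unfolding simple_graph_def darts_def nbrs_def by auto

lemma simple_graph_finite_darts:
  assumes "simple_graph V E"
  shows "finite (darts E)"
proof -
  have "finite V" using assms unfolding simple_graph_def by blast
  then show ?thesis
    unfolding simple_graph_darts_eq_Sigma[OF assms]
    using simple_graph_finite_nbrs[OF assms] by (rule finite_SigmaI)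
qed

lemma card_darts_eq_sum_deg:
  assumes "simple_graph V E"
  shows "card (darts E) = (\<Sum>v\<in>V. deg E v)"
proof -
  have "finite V" using assms unfolding simple_graph_def by blast
  then show ?thesis
    unfolding simple_graph_darts_eq_Sigma[OF assms] deg_def
    using simple_graph_finite_nbrs[OF assms] by simp
qed

lemma card_darts_eq_twice_edges:
  assumes "simple_graph V E"
  shows "card (darts E) = 2 * card (graph_edges E)"
proof -
  define ends :: "'a \<times> 'a \<Rightarrow> 'a set" where "ends = (\<lambda>(u, w). {u, w})"
  have edges: "graph_edges E = ends ` darts E"
    unfolding graph_edges_def darts_def ends_def by auto
  have "card (darts E) = (\<Sum>e\<in>ends ` darts E. card {d \<in> darts E. ends d = e})"
    using sum.image_gen[OF simple_graph_finite_darts[OF assms], of "\<lambda>_. 1::nat" ends]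
    by simp
  also have "\<dots> = (\<Sum>e\<in>ends ` darts E. 2)"
  proof (rule sum.cong[OF refl])
    fix e assume "e \<in> ends ` darts E"
    then obtain u w where "E u w" and e: "e = {u, w}"
      unfolding ends_def darts_def by auto
    then have "{d \<in> darts E. ends d = e} = {(u, w), (w, u)}" and "u \<noteq> w"
      using assms unfolding simple_graph_def darts_def ends_def
      by (auto simp: doubleton_eq_iff)
    then show "card {d \<in> darts E. ends d = e} = 2" by simp
  qed
  finally show ?thesis unfolding edges by simp
qed

lemma rotation_system_inj_on_rot:
  assumes "simple_graph V E" and "rotation_system V E rot"
  shows "inj_on (rot v) (nbrs E v)"
proof (cases "v \<in> V")
  case True
  then show ?thesis
    using assms simple_graph_finite_nbrs unfolding rotation_system_def
    by (intro inj_on_if_orbits_cover) auto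
next
  case False
  then have "nbrs E v = {}" using assms(1) unfolding simple_graph_def nbrs_def by auto
  then show ?thesis by simp
qed

lemma rotation_system_rot_in_nbrs:
  assumes "rotation_system V E rot" and "v \<in> V" and "w \<in> nbrs E v"
  shows "rot v w \<in> nbrs E v"
  using assms unfolding rotation_system_def by simp

lemma face_perm_bij_betw_darts:
  assumes "simple_graph V E" and "rotation_system V E rot"
  shows "bij_betw (face_perm rot) (darts E) (darts E)"
proof -
  have reverse_dart: "u \<in> nbrs E w" "w \<in> V" if "(u, w) \<in> darts E" for u w
  proof -
    have "E u w" using that unfolding darts_def by simp
    with assms(1) have "E w u" "w \<in> V" unfolding simple_graph_def by blast+
    then show "u \<in> nbrs E w" "w \<in> V" unfolding nbrs_def by simp_all
  qed
  have maps: "face_perm rot ` darts E \<subseteq> darts E"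
  proof (rule image_subsetI)
    fix d assume "d \<in> darts E"
    moreover obtain u w where d: "d = (u, w)" by fastforce
    ultimately have "rot w u \<in> nbrs E w"
      using reverse_dart rotation_system_rot_in_nbrs[OF assms(2)] by simp
    then show "face_perm rot d \<in> darts E"
      unfolding d face_perm_def darts_def nbrs_def by simp
  qed
  have "inj_on (face_perm rot) (darts E)"
  proof (rule inj_onI)
    fix d d' assume "d \<in> darts E" "d' \<in> darts E" and "face_perm rot d = face_perm rot d'"
    moreover obtain u w u' w' where d: "d = (u, w)" and d': "d' = (u', w')" by fastforce
    ultimately have "w' = w" and "rot w u = rot w u'" and "u \<in> nbrs E w" and "u' \<in> nbrs E w"
      using reverse_dart unfolding face_perm_def by auto
    then have "u = u'" using inj_onD[OF rotation_system_inj_on_rot[OF assms]] by blast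
    then show "d = d'" using d d' \<open>w' = w\<close> by simp
  qed
  with maps show ?thesis
    using endo_inj_surj simple_graph_finite_darts[OF assms(1)] unfolding bij_betw_def by blast
qed

lemma sum_inverse_face_size:
  assumes "simple_graph V E" and "rotation_system V E rot"
  shows "(\<Sum>d\<in>darts E. 1 / real (card (face_of rot d))) = real (card (faces E rot))"
  unfolding faces_def
proof (rule sum_inverse_card_classes)
  note finite = simple_graph_finite_darts[OF assms(1)]
    and bij = face_perm_bij_betw_darts[OF assms]
  show "finite (darts E)" by (fact finite)
  show "d \<in> face_of rot d" for d
    unfolding face_of_def by (auto intro: exI[of _ 0])
  show "face_of rot d \<subseteq> darts E" if "d \<in> darts E" for d
    using bij_betw_apply[OF bij_betw_funpow[OF bij] that] unfolding face_of_def by blast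
  show "face_of rot d' = face_of rot d" if "d \<in> darts E" "d' \<in> face_of rot d" for d d'
    using funpow_orbit_eq[OF finite bij] that unfolding face_of_def by blast
qed

theorem total_curvature_spherical_map:
  assumes "spherical_map V E rot"
  shows "(\<Sum>v\<in>V. curvature E rot v) = 2"
proof -
  have graph: "simple_graph V E" and rotation: "rotation_system V E rot"
    and euler: "int (card V) - int (card (graph_edges E)) + int (card (faces E rot)) = 2"
    using assms unfolding spherical_map_def by blast+
  have finite_V: "finite V" using graph unfolding simple_graph_def by blast
  have corners: "(\<Sum>v\<in>V. \<Sum>w\<in>nbrs E v. 1 / real (card (face_of rot (v, w))))
      = (\<Sum>d\<in>darts E. 1 / real (card (face_of rot d)))"
    unfolding simple_graph_darts_eq_Sigma[OF graph]
    using sum.Sigma[OF finite_V, of "nbrs E" "\<lambda>v w. 1 / real (card (face_of rot (v, w)))"]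
      simple_graph_finite_nbrs[OF graph]
    by simp
  have "(\<Sum>v\<in>V. curvature E rot v) = real (card V) - (\<Sum>v\<in>V. real (deg E v)) / 2
      + (\<Sum>v\<in>V. \<Sum>w\<in>nbrs E v. 1 / real (card (face_of rot (v, w))))"
    unfolding curvature_def
    by (simp add: sum.distrib sum_subtractf sum_divide_distrib)
  also have "\<dots> = real (card V) - real (card (graph_edges E)) + real (card (faces E rot))"
    unfolding corners sum_inverse_face_size[OF graph rotation]
    using card_darts_eq_sum_deg[OF graph] card_darts_eq_twice_edges[OF graph]
    by (simp flip: of_nat_sum)
  also have "\<dots> = 2" using euler by linarith
  finally show ?thesis .
qed

definition vertex_curvature :: "nat multiset \<Rightarrow> real" where
  "vertex_curvature F = 1 - real (size F) / 2 + (\<Sum>n\<in>#F. 1 / real n)"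

lemma curvature_eq_vertex_curvature:
  assumes "finite (nbrs E v)"
  shows "curvature E rot v = vertex_curvature (face_vector E rot v)"
  unfolding curvature_def vertex_curvature_def face_vector_def deg_def
  by (simp add: sum_unfold_sum_mset multiset.map_comp o_def)

lemma card_mult_le_sum:
  fixes K :: "'a \<Rightarrow> real"
  assumes "finite V" and "Z \<subseteq> V" and "\<And>v. v \<in> V \<Longrightarrow> K v \<ge> 0"
    and "\<And>v. v \<in> Z \<Longrightarrow> K v = c"
  shows "real (card Z) * c \<le> (\<Sum>v\<in>V. K v)"
proof -
  have "real (card Z) * c = (\<Sum>v\<in>Z. K v)" using assms(4) by simp
  also have "\<dots> \<le> (\<Sum>v\<in>V. K v)" using assms(1-3) by (intro sum_mono2) auto
  finally show ?thesis .
qed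

theorem lemma15p1:
  fixes V :: "'v set" and E :: "'v \<Rightarrow> 'v \<Rightarrow> bool" and rot :: "'v \<Rightarrow> 'v \<Rightarrow> 'v"
  assumes "planar_PCC V E rot"
  shows "card {v \<in> V. face_vector E rot v = {#5, 6, 7#}
                     \<or> face_vector E rot v = {#3, 3, 5, 7#}} \<le> 210"
proof -
  define Z where "Z = {v \<in> V. face_vector E rot v = {#5, 6, 7#}
                             \<or> face_vector E rot v = {#3, 3, 5, 7#}}"
  have map: "spherical_map V E rot" and positive: "\<And>v. v \<in> V \<Longrightarrow> curvature E rot v > 0"
    using assms unfolding planar_PCC_def by blast+
  have graph: "simple_graph V E" using map unfolding spherical_map_def by blast
  then have "finite V" unfolding simple_graph_def by blast
  have "curvature E rot v = 1 / 105" if "v \<in> Z" for v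
  proof -
    have "vertex_curvature (face_vector E rot v) = 1 / 105"
      using that unfolding Z_def by (auto simp: vertex_curvature_def)
    then show ?thesis
      using curvature_eq_vertex_curvature[OF simple_graph_finite_nbrs[OF graph]] by simp
  qed
  then have "real (card Z) * (1 / 105) \<le> (\<Sum>v\<in>V. curvature E rot v)"
    using \<open>finite V\<close> positive less_imp_le unfolding Z_def
    by (intro card_mult_le_sum) auto
  also have "\<dots> = 2" using total_curvature_spherical_map[OF map] .
  finally show ?thesis unfolding Z_def by simp
qed

end
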